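(* Let $q\ge 2$ and $n\ge 2$ be integers and let $m=n-1$. Under uniform transmission over the $1$-deletion channel with input length $n$, $$\max_{{\boldsymbol y}\in\Sigma_q^{m}} \mathsf{H}^{\mathsf{In}}_{1\text{-}\mathsf{Del}}({\boldsymbol y}) = \log_2(nq)-\frac{2m}{nq},$$ and this maximum is attained only by channel outputs ${\boldsymbol y}$ with $\rho({\boldsymbol y})=m$ runs (i.e., all runs of length one).
   Context: $\Sigma_q=\{0,1,\dots,q-1\}$. For sequences ${\boldsymbol x}$ of length $N$ and ${\boldsymbol y}$ of length $\ell\le N$, the embedding number $\omega_{{\boldsymbol y}}({\boldsymbol x})$ is the number of index tuples $1\le i_1<\dots<i_\ell\le N$ with $x_{i_j}=y_j$ for all $j$. The $k$-deletion channel with input length $n$ maps ${\boldsymbol x}\in\Sigma_q^n$ to ${\boldsymbol y}\in\Sigma_q^{n-k}$ with probability $\Pr\{{\boldsymbol y}\mid{\boldsymbol x}\}=\omega_{{\boldsymbol y}}({\boldsymbol x})/\binom{n}{k}$ (exactly $k$ positions, chosen uniformly among the $\binom nk$ subsets, are deleted). Under uniform transmission, the input $X$ is uniform on $\Sigma_q^n$, and for an output ${\boldsymbol y}$ the input entropy is $\mathsf{H}^{\mathsf{In}}_{k\text{-}\mathsf{Del}}({\boldsymbol y})=H(X\mid Y={\boldsymbol y})=-\sum_{{\boldsymbol x}}P({\boldsymbol x}\mid{\boldsymbol y})\log_2 P({\boldsymbol x}\mid{\boldsymbol y})$ where $P({\boldsymbol x}\mid {\boldsymbol y})=\Pr\{{\boldsymbol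 y}\mid{\boldsymbol x}\}/\sum_{{\boldsymbol x}'\in\Sigma_q^n}\Pr\{{\boldsymbol y}\mid{\boldsymbol x}'\}$. A run of a sequence is a maximal block of identical consecutive symbols; $\rho({\boldsymbol y})$ is the number of runs of ${\boldsymbol y}$. *)

theory Defs
  imports Complex_Main
begin

definition seqs :: "nat \<Rightarrow> nat \<Rightarrow> nat list set" where
  "seqs q n = {xs. length xs = n \<and> set xs \<subseteq> {..<q}}"

definition emb :: "nat list \<Rightarrow> nat list \<Rightarrow> nat" where
  "emb y x = card {I. I \<subseteq> {..<length x} \<and> card I = length y \<and> nths x I = y}"

definition del_prob :: "nat \<Rightarrow> nat \<Rightarrow> nat list \<Rightarrow> nat list \<Rightarrow> real" where
  "del_prob n k y x = real (emb y x) / real (n choose k)"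

definition posterior :: "nat \<Rightarrow> nat \<Rightarrow> nat \<Rightarrow> nat list \<Rightarrow> nat list \<Rightarrow> real" where
  "posterior q n k y x = del_prob n k y x / (\<Sum>x'\<in>seqs q n. del_prob n k y x')"

definition input_entropy :: "nat \<Rightarrow> nat \<Rightarrow> nat \<Rightarrow> nat list \<Rightarrow> real" where
  "input_entropy q n k y =
     - (\<Sum>x\<in>seqs q n. (if posterior q n k y x = 0 then 0
                        else posterior q n k y x * log 2 (posterior q n k y x)))"

definition runs :: "nat list \<Rightarrow> nat" where
  "runs y = length (remdups_adj y)"

end

theory Submission
  imports Defs
begin

text \<open>For y of length m and x of length n = m + 1, the embedding number of y in x counts the
  positions of x whose deletion yields y. These positions form an interval, so their number e(x) is
  the length of a run of x. The pairs (x, position) correspond to the n q single insertions into y,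
  so the posterior of x is e(x) / (n q) and the entropy equals log(n q) - (\<Sum>x e(x) log e(x)) / (n q).
  Pairs of adjacent deletion positions of x correspond to doubling one of the m symbols of y, so
  \<Sum>x (e(x) - 1) = m. Since e log e \<ge> 2 (e - 1) for every natural e (logarithms to base 2),
  with equality iff e \<le> 2, the entropy is at most log(n q) - 2 m / (n q), with equality iff no x
  has three deletion positions, which happens iff no two adjacent symbols of y are equal.\<close>

definition del_at :: "nat \<Rightarrow> 'a list \<Rightarrow> 'a list" where
  "del_at j xs = take j xs @ drop (Suc j) xs"

definition ins_at :: "nat \<Rightarrow> 'a \<Rightarrow> 'a list \<Rightarrow> 'a list" where
  "ins_at i a xs = take i xs @ a # drop i xs"

lemma length_del_at: "j < length xs \<Longrightarrow> length (del_at j xs) = length xs - 1"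
  by (simp add: del_at_def)

lemma nth_del_at:
  "j < length xs \<Longrightarrow> p < length xs - 1 \<Longrightarrow> del_at j xs ! p = (if p < j then xs ! p else xs ! Suc p)"
  by (auto simp: del_at_def nth_append min_def add.commute)

lemma length_ins_at: "i \<le> length xs \<Longrightarrow> length (ins_at i a xs) = Suc (length xs)"
  by (simp add: ins_at_def)

lemma nth_ins_at:
  assumes "i \<le> length xs" and "p \<le> length xs"
  shows "ins_at i a xs ! p = (if p < i then xs ! p else if p = i then a else xs ! (p - 1))"
proof (cases "p \<le> i")
  case False
  then obtain r where "p = Suc (i + r)"
    by (metis less_imp_Suc_add not_le)
  then show ?thesis
    using assms by (auto simp: ins_at_def nth_append min_def)
qed (use assms in \<open>auto simp: ins_at_def nth_append min_def\<close>)

lemma set_ins_at: "set (ins_at i a xs) \<subseteq> insert a (set xs)"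
  unfolding ins_at_def using set_take_subset set_drop_subset by fastforce

lemma nth_ins_at_same [simp]: "i \<le> length xs \<Longrightarrow> ins_at i a xs ! i = a"
  by (simp add: nth_ins_at)

lemma ins_at_Suc_nth: "i < length xs \<Longrightarrow> ins_at (Suc i) (xs ! i) xs = ins_at i (xs ! i) xs"
  by (simp add: ins_at_def take_Suc_conv_app_nth Cons_nth_drop_Suc)

lemma del_at_ins_at: "i \<le> length xs \<Longrightarrow> del_at i (ins_at i a xs) = xs"
  by (simp add: del_at_def ins_at_def)

lemma ins_at_del_at: "j < length xs \<Longrightarrow> ins_at j (xs ! j) (del_at j xs) = xs"
  by (simp add: del_at_def ins_at_def id_take_nth_drop[symmetric] min_def)

lemma nths_Diff_singleton: "j < length xs \<Longrightarrow> nths xs ({..<length xs} - {j}) = del_at j xs"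
proof -
  assume j: "j < length xs"
  have "nths (drop (Suc j) xs) {i. Suc (i + j) < length xs} = drop (Suc j) xs"
    by (rule nths_all) auto
  then have "nths (take j xs @ xs ! j # drop (Suc j) xs) ({..<length xs} - {j}) = del_at j xs"
    using j by (simp add: del_at_def nths_append nths_Cons nths_all min_def)
  then show ?thesis
    using j by (simp add: id_take_nth_drop[symmetric])
qed

lemma del_at_eq_del_at_iff:
  assumes "j \<le> k" and "k < length xs"
  shows "del_at j xs = del_at k xs \<longleftrightarrow> (\<forall>p. j \<le> p \<and> p < k \<longrightarrow> xs ! p = xs ! Suc p)"
proof
  assume eq: "del_at j xs = del_at k xs"
  show "\<forall>p. j \<le> p \<and> p < k \<longrightarrow> xs ! p = xs ! Suc p"
  proof (intro allI impI)
    fix p assume p: "j \<le> p \<and> p < k"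
    have "xs ! Suc p = del_at j xs ! p"
      using assms p by (subst nth_del_at) auto
    also have "\<dots> = xs ! p"
      using assms p by (simp only: eq, subst nth_del_at) auto
    finally show "xs ! p = xs ! Suc p" ..
  qed
next
  assume "\<forall>p. j \<le> p \<and> p < k \<longrightarrow> xs ! p = xs ! Suc p"
  then show "del_at j xs = del_at k xs"
    using assms by (intro nth_equalityI) (auto simp: length_del_at nth_del_at)
qed

lemma del_at_eq_del_at_Suc_iff:
  "Suc j < length xs \<Longrightarrow> del_at j xs = del_at (Suc j) xs \<longleftrightarrow> xs ! j = xs ! Suc j"
  unfolding del_at_eq_del_at_iff[OF le_SucI[OF order_refl]]
  by (metis le_antisym less_Suc_eq_le lessI)

definition deletion_positions :: "'a list \<Rightarrow> 'a list \<Rightarrow> nat set" where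
  "deletion_positions y x = {j. j < length x \<and> del_at j x = y}"

lemma finite_deletion_positions: "finite (deletion_positions y x)"
  by (simp add: deletion_positions_def)

lemma mem_deletion_positions_iff:
  "j \<in> deletion_positions y x \<longleftrightarrow> j \<le> length y \<and> (\<exists>a. x = ins_at j a y)"
proof
  assume "j \<in> deletion_positions y x"
  then have j: "j < length x" and y: "y = del_at j x"
    by (auto simp: deletion_positions_def)
  then have "x = ins_at j (x ! j) y"
    by (simp add: ins_at_del_at)
  moreover have "j \<le> length y"
    using j by (simp add: y length_del_at)
  ultimately show "j \<le> length y \<and> (\<exists>a. x = ins_at j a y)"
    by blast
next
  assume "j \<le> length y \<and> (\<exists>a. x = ins_at j a y)"
  then obtain a where "j \<le> length y" and "x = ins_at j a y"
    by blast
  then show "j \<in> deletion_positions y x"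
    by (simp add: deletion_positions_def length_ins_at del_at_ins_at)
qed

lemma emb_eq_card_deletion_positions:
  assumes "length x = Suc (length y)"
  shows "emb y x = card (deletion_positions y x)"
proof -
  let ?n = "length x"
  have "{I. I \<subseteq> {..<?n} \<and> card I = length y \<and> nths x I = y}
      = (\<lambda>j. {..<?n} - {j}) ` deletion_positions y x"
  proof (intro equalityI subsetI)
    fix I assume "I \<in> {I. I \<subseteq> {..<?n} \<and> card I = length y \<and> nths x I = y}"
    then have I: "I \<subseteq> {..<?n}" "card I = length y" "nths x I = y" by auto
    then have "card ({..<?n} - I) = 1"
      using assms by (simp add: card_Diff_subset finite_subset)
    then obtain j where j: "{..<?n} - I = {j}"
      by (auto simp: card_1_singleton_iff)
    then have "j < ?n" and "I = {..<?n} - {j}"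
      using I(1) by auto
    with I(3) show "I \<in> (\<lambda>j. {..<?n} - {j}) ` deletion_positions y x"
      by (auto simp: deletion_positions_def nths_Diff_singleton)
  next
    fix I assume "I \<in> (\<lambda>j. {..<?n} - {j}) ` deletion_positions y x"
    then obtain j where "j < ?n" "del_at j x = y" "I = {..<?n} - {j}"
      by (auto simp: deletion_positions_def)
    then show "I \<in> {I. I \<subseteq> {..<?n} \<and> card I = length y \<and> nths x I = y}"
      using assms nths_Diff_singleton[of j x] by auto
  qed
  moreover have "inj_on (\<lambda>j. {..<?n} - {j}) (deletion_positions y x)"
    by (rule inj_onI) (auto simp: deletion_positions_def)
  ultimately show ?thesis
    unfolding emb_def by (simp add: card_image)
qed

lemma deletion_positions_convex:
  assumes "i \<in> deletion_positions y x" and "k \<in> deletion_positions y x" and "i \<le> j" and "j \<le> k"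
  shows "j \<in> deletion_positions y x"
proof -
  have k: "k < length x" "del_at k x = y" and "del_at i x = del_at k x"
    using assms(1,2) by (simp_all add: deletion_positions_def)
  then have "\<forall>p. i \<le> p \<and> p < k \<longrightarrow> x ! p = x ! Suc p"
    using del_at_eq_del_at_iff[of i k x] assms(3,4) by simp
  then have "del_at j x = del_at k x"
    using del_at_eq_del_at_iff[of j k x] assms(3,4) k(1) by auto
  with k assms(4) show ?thesis
    by (simp add: deletion_positions_def)
qed

lemma deletion_positions_eq_atLeastAtMost:
  assumes "deletion_positions y x \<noteq> {}"
  shows "deletion_positions y x = {Min (deletion_positions y x)..Max (deletion_positions y x)}"
    (is "?D = {?a..?b}")
proof -
  have fin: "finite ?D"
    by (rule finite_deletion_positions)
  have "?a \<in> ?D" and "?b \<in> ?D"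
    using Min_in[OF fin assms] Max_in[OF fin assms] .
  then have "{?a..?b} \<subseteq> ?D"
    using deletion_positions_convex by auto
  moreover have "?D \<subseteq> {?a..?b}"
    using Min_le[OF fin] Max_ge[OF fin] by auto
  ultimately show ?thesis
    by blast
qed

lemma card_adjacent_deletion_positions:
  "card {j \<in> deletion_positions y x. Suc j \<in> deletion_positions y x}
     = card (deletion_positions y x) - 1"
proof (cases "deletion_positions y x = {}")
  case False
  then obtain a b where D: "deletion_positions y x = {a..b}"
    using deletion_positions_eq_atLeastAtMost by blast
  have "{j \<in> {a..b}. Suc j \<in> {a..b}} = {a..<b}" by auto
  then show ?thesis
    by (simp add: D)
qed simp

lemma adjacent_deletion_positions_iff:
  "j \<in> deletion_positions y x \<and> Suc j \<in> deletion_positions y x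
     \<longleftrightarrow> j < length y \<and> x = ins_at j (y ! j) y"
proof
  assume j: "j \<in> deletion_positions y x \<and> Suc j \<in> deletion_positions y x"
  then have len: "Suc j < length x" "y = del_at j x"
    by (auto simp: deletion_positions_def)
  then have "x ! j = x ! Suc j"
    using j del_at_eq_del_at_Suc_iff[of j x] by (auto simp: deletion_positions_def)
  moreover have "y ! j = x ! Suc j"
    using len by (auto simp: nth_del_at length_del_at)
  moreover have "j < length y"
    using len by (simp add: length_del_at)
  ultimately show "j < length y \<and> x = ins_at j (y ! j) y"
    using len ins_at_del_at[of j x] by simp
next
  assume j: "j < length y \<and> x = ins_at j (y ! j) y"
  then have len: "length x = Suc (length y)" and "x ! j = x ! Suc j"
    by (auto simp: length_ins_at nth_ins_at)
  then have "del_at j x = del_at (Suc j) x"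
    using j by (simp add: del_at_eq_del_at_Suc_iff)
  then show "j \<in> deletion_positions y x \<and> Suc j \<in> deletion_positions y x"
    using j len by (auto simp: deletion_positions_def del_at_ins_at)
qed

lemma finite_seqs: "finite (seqs q n)"
proof -
  have "seqs q n = {xs. set xs \<subseteq> {..<q} \<and> length xs = n}"
    by (auto simp: seqs_def)
  then show ?thesis
    using finite_lists_length_eq[of "{..<q}" n] by simp
qed

lemma nth_in_seqs_less:
  assumes "y \<in> seqs q m" and "j < m"
  shows "y ! j < q"
proof -
  have "y ! j \<in> set y"
    using assms by (simp add: seqs_def)
  with assms(1) show ?thesis
    by (auto simp: seqs_def)
qed

lemma ins_at_in_seqs: "y \<in> seqs q m \<Longrightarrow> i \<le> m \<Longrightarrow> a < q \<Longrightarrow> ins_at i a y \<in> seqs q (Suc m)"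
  using set_ins_at[of i a y] by (auto simp: seqs_def length_ins_at)

text \<open>The pairs (x, j) with j a deletion position of x are the single insertions into y, indexed by
  position and inserted symbol.\<close>
lemma sum_card_deletion_positions:
  assumes y: "y \<in> seqs q m"
  shows "(\<Sum>x\<in>seqs q (Suc m). card (deletion_positions y x)) = Suc m * q"
proof -
  have ly: "length y = m"
    using y by (simp add: seqs_def)
  let ?ins = "\<lambda>(j, a). (ins_at j a y, j)"
  have "(SIGMA x:seqs q (Suc m). deletion_positions y x) = ?ins ` ({..<Suc m} \<times> {..<q})"
  proof (intro equalityI subsetI)
    fix p assume "p \<in> (SIGMA x:seqs q (Suc m). deletion_positions y x)"
    then obtain j a where p: "p = (ins_at j a y, j)" "ins_at j a y \<in> seqs q (Suc m)" "j \<le> m"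
      by (auto simp: mem_deletion_positions_iff ly)
    then have "a \<in> set (ins_at j a y)"
      by (metis ly nth_ins_at_same length_ins_at le_imp_less_Suc nth_mem)
    then have "a < q"
      using p(2) by (auto simp: seqs_def)
    with p show "p \<in> ?ins ` ({..<Suc m} \<times> {..<q})"
      by force
  next
    fix p assume "p \<in> ?ins ` ({..<Suc m} \<times> {..<q})"
    then show "p \<in> (SIGMA x:seqs q (Suc m). deletion_positions y x)"
      using y ly by (auto simp: ins_at_in_seqs mem_deletion_positions_iff)
  qed
  moreover have "inj_on ?ins ({..<Suc m} \<times> {..<q})"
    by (rule inj_onI) (clarsimp, metis ly less_Suc_eq_le nth_ins_at_same)
  ultimately have "card (SIGMA x:seqs q (Suc m). deletion_positions y x) = Suc m * q"
    by (simp add: card_image card_cartesian_product)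
  then show ?thesis
    by (subst (asm) card_SigmaI) (simp_all add: finite_seqs finite_deletion_positions)
qed

lemma sum_card_deletion_positions_minus_1:
  assumes y: "y \<in> seqs q m"
  shows "(\<Sum>x\<in>seqs q (Suc m). card (deletion_positions y x) - 1) = m"
proof -
  have ly: "length y = m"
    using y by (simp add: seqs_def)
  let ?A = "\<lambda>x. {j \<in> deletion_positions y x. Suc j \<in> deletion_positions y x}"
  let ?double = "\<lambda>j. (ins_at j (y ! j) y, j)"
  have "(SIGMA x:seqs q (Suc m). ?A x) = ?double ` {..<m}"
  proof (intro equalityI subsetI)
    fix p assume "p \<in> (SIGMA x:seqs q (Suc m). ?A x)"
    then obtain x j where p: "p = (x, j)" and "j \<in> ?A x"
      by blast
    then have "j < m" and "x = ins_at j (y ! j) y"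
      using adjacent_deletion_positions_iff[of j y x] ly by simp_all
    with p show "p \<in> ?double ` {..<m}"
      by blast
  next
    fix p assume "p \<in> ?double ` {..<m}"
    then obtain j where p: "p = ?double j" and j: "j < m"
      by blast
    have "ins_at j (y ! j) y \<in> seqs q (Suc m)"
      using y j by (simp add: ins_at_in_seqs nth_in_seqs_less)
    moreover have "j \<in> ?A (ins_at j (y ! j) y)"
      using adjacent_deletion_positions_iff[of j y "ins_at j (y ! j) y"] j ly by simp
    ultimately show "p \<in> (SIGMA x:seqs q (Suc m). ?A x)"
      using p by blast
  qed
  moreover have "inj_on ?double {..<m}"
    by (rule inj_onI) simp
  ultimately have "card (SIGMA x:seqs q (Suc m). ?A x) = m"
    by (simp add: card_image)
  then have "(\<Sum>x\<in>seqs q (Suc m). card (?A x)) = m"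
    by (subst (asm) card_SigmaI) (simp_all add: finite_seqs finite_deletion_positions)
  then show ?thesis
    by (simp add: card_adjacent_deletion_positions)
qed

lemma card_deletion_positions_le_2:
  assumes "distinct_adj y"
  shows "card (deletion_positions y x) \<le> 2"
proof (rule ccontr)
  let ?D = "deletion_positions y x"
  assume "\<not> card ?D \<le> 2"
  then have "?D \<noteq> {}"
    by auto
  then obtain a b where D: "?D = {a..b}"
    using deletion_positions_eq_atLeastAtMost by blast
  with \<open>\<not> card ?D \<le> 2\<close> have "a + 2 \<le> b"
    by simp
  then have adj: "a \<in> ?D \<and> Suc a \<in> ?D" and adj_Suc: "Suc a \<in> ?D \<and> Suc (Suc a) \<in> ?D"
    by (simp_all add: D)
  from adj have x: "x = ins_at a (y ! a) y"
    by (simp only: adjacent_deletion_positions_iff)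
  from adj_Suc have a: "Suc a < length y" and x_Suc: "x = ins_at (Suc a) (y ! Suc a) y"
    by (simp_all only: adjacent_deletion_positions_iff)
  have "y ! a = x ! Suc a"
    using a by (simp add: x nth_ins_at)
  also have "\<dots> = y ! Suc a"
    using a by (simp add: x_Suc)
  finally show False
    using assms a by (simp add: distinct_adj_nth)
qed

lemma exists_card_deletion_positions_ge_3:
  assumes y: "y \<in> seqs q m" and "\<not> distinct_adj y"
  shows "\<exists>x\<in>seqs q (Suc m). 3 \<le> card (deletion_positions y x)"
proof -
  obtain k where k: "Suc k < length y" "y ! k = y ! Suc k"
    using assms(2) by (auto simp: distinct_adj_conv_nth)
  define x where "x = ins_at k (y ! k) y"
  have "x = ins_at (Suc k) (y ! Suc k) y"
    unfolding x_def k(2)[symmetric] using k(1) by (simp add: ins_at_Suc_nth)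
  then have "Suc k \<in> deletion_positions y x \<and> Suc (Suc k) \<in> deletion_positions y x"
    using k(1) by (simp only: adjacent_deletion_positions_iff)
  moreover have "k \<in> deletion_positions y x"
    using k(1) adjacent_deletion_positions_iff[of k y x] by (simp add: x_def)
  ultimately have "{k, Suc k, Suc (Suc k)} \<subseteq> deletion_positions y x"
    by blast
  then have "card {k, Suc k, Suc (Suc k)} \<le> card (deletion_positions y x)"
    by (rule card_mono[OF finite_deletion_positions])
  then have "3 \<le> card (deletion_positions y x)"
    by simp
  moreover have "length y = m"
    using y by (simp add: seqs_def)
  then have "x \<in> seqs q (Suc m)"
    using y k(1) by (simp add: x_def ins_at_in_seqs nth_in_seqs_less)
  ultimately show ?thesis
    by blast
qed

lemma distinct_adj_iff_card_deletion_positions_le_2: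
  assumes "y \<in> seqs q m"
  shows "distinct_adj y \<longleftrightarrow> (\<forall>x\<in>seqs q (Suc m). card (deletion_positions y x) \<le> 2)"
  using assms card_deletion_positions_le_2 exists_card_deletion_positions_ge_3 by fastforce

lemma double_pred_less_xlog2x:
  assumes "3 \<le> e"
  shows "2 * real (e - 1) < real e * log 2 (real e)"
proof (cases "e = 3")
  case True
  have "(4 :: real) = log 2 (2 ^ 4)"
    by (subst log_pow_cancel) simp_all
  also have "\<dots> < log 2 (3 ^ 3)"
    by simp
  also have "\<dots> = 3 * log 2 3"
    by (subst log_nat_power) simp_all
  finally show ?thesis
    using True by simp
next
  case False
  with assms have "log 2 (2 ^ 2) \<le> log 2 (real e)"
    by simp
  then have "2 \<le> log 2 (real e)"
    by (subst (asm) log_pow_cancel) simp_all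
  then have "real e * 2 \<le> real e * log 2 (real e)"
    by (simp add: mult_left_mono)
  moreover have "2 * real (e - 1) = 2 * real e - 2"
    using assms by (simp add: of_nat_diff)
  ultimately show ?thesis
    by linarith
qed

text \<open>For e = 0 both sides vanish because of truncated subtraction.\<close>
lemma double_pred_le_xlog2x:
  shows "2 * real (e - 1) \<le> real e * log 2 (real e)"
    and "2 * real (e - 1) = real e * log 2 (real e) \<longleftrightarrow> e \<le> 2"
proof -
  have "e \<le> 2 \<Longrightarrow> e = 0 \<or> e = 1 \<or> e = 2"
    by auto
  then have "e \<le> 2 \<Longrightarrow> 2 * real (e - 1) = real e * log 2 (real e)"
    by auto
  then show "2 * real (e - 1) \<le> real e * log 2 (real e)"
    and "2 * real (e - 1) = real e * log 2 (real e) \<longleftrightarrow> e \<le> 2"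
    using double_pred_less_xlog2x[of e] by (cases "e \<le> 2"; force)+
qed

lemma entropy_of_weights:
  fixes w :: "'a \<Rightarrow> real"
  assumes "finite A" and "\<And>x. x \<in> A \<Longrightarrow> 0 \<le> w x" and "W = (\<Sum>x\<in>A. w x)" and "0 < W"
  shows "- (\<Sum>x\<in>A. if w x / W = 0 then 0 else w x / W * log 2 (w x / W))
           = log 2 W - (\<Sum>x\<in>A. w x * log 2 (w x)) / W"
proof -
  have summand: "(if w x / W = 0 then 0 else w x / W * log 2 (w x / W))
      = w x * log 2 (w x) / W - log 2 W * (w x / W)" if "x \<in> A" for x
  proof (cases "w x = 0")
    case False
    with assms(2)[OF that] have "0 < w x"
      by simp
    with assms(4) show ?thesis
      by (simp add: log_divide field_simps)
  qed simp
  have "(\<Sum>x\<in>A. if w x / W = 0 then 0 else w x / W * log 2 (w x / W))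
      = (\<Sum>x\<in>A. w x * log 2 (w x) / W - log 2 W * (w x / W))"
    by (rule sum.cong[OF refl summand])
  also have "\<dots> = (\<Sum>x\<in>A. w x * log 2 (w x)) / W - log 2 W * (\<Sum>x\<in>A. w x / W)"
    by (simp add: sum_subtractf sum_divide_distrib sum_distrib_left)
  also have "(\<Sum>x\<in>A. w x / W) = 1"
    using assms(3,4) by (simp add: sum_divide_distrib[symmetric])
  finally show ?thesis
    by simp
qed

lemma posterior_eq:
  assumes "k \<le> n"
  shows "posterior q n k y x = real (emb y x) / (\<Sum>x'\<in>seqs q n. real (emb y x'))"
proof -
  have "real (n choose k) > 0"
    using assms by simp
  then show ?thesis
    by (simp add: posterior_def del_prob_def sum_divide_distrib[symmetric])
qed

lemma input_entropy_eq:
  assumes "k \<le> n" and "W = (\<Sum>x\<in>seqs q n. real (emb y x))" and "0 < W"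
  shows "input_entropy q n k y
           = log 2 W - (\<Sum>x\<in>seqs q n. real (emb y x) * log 2 (real (emb y x))) / W"
  unfolding input_entropy_def posterior_eq[OF assms(1)] assms(2)[symmetric]
  using entropy_of_weights[OF finite_seqs _ assms(2,3)] by simp

lemma input_entropy_one_deletion:
  assumes y: "y \<in> seqs q m" and "1 \<le> q"
  shows "input_entropy q (Suc m) 1 y = log 2 (real (Suc m) * real q)
           - (\<Sum>x\<in>seqs q (Suc m). real (card (deletion_positions y x))
                 * log 2 (real (card (deletion_positions y x)))) / (real (Suc m) * real q)"
proof -
  have emb: "emb y x = card (deletion_positions y x)" if "x \<in> seqs q (Suc m)" for x
    using that y by (intro emb_eq_card_deletion_positions) (simp add: seqs_def)
  have "(\<Sum>x\<in>seqs q (Suc m). real (emb y x))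
      = real (\<Sum>x\<in>seqs q (Suc m). card (deletion_positions y x))"
    unfolding of_nat_sum by (rule sum.cong) (simp_all add: emb)
  also have "\<dots> = real (Suc m) * real q"
    by (simp only: sum_card_deletion_positions[OF y] of_nat_mult)
  finally have W: "(\<Sum>x\<in>seqs q (Suc m). real (emb y x)) = real (Suc m) * real q" .
  with assms show ?thesis
    by (subst input_entropy_eq[OF _ W[symmetric]]) (simp_all add: emb)
qed

lemma sum_xlog2x_card_deletion_positions:
  assumes y: "y \<in> seqs q m"
  defines "S \<equiv> \<Sum>x\<in>seqs q (Suc m). real (card (deletion_positions y x))
                  * log 2 (real (card (deletion_positions y x)))"
  shows "2 * real m \<le> S" and "S = 2 * real m \<longleftrightarrow> distinct_adj y"
proof -
  let ?e = "\<lambda>x. card (deletion_positions y x)"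
  let ?d = "\<lambda>x. real (?e x) * log 2 (real (?e x)) - 2 * real (?e x - 1)"
  have "2 * real m = (\<Sum>x\<in>seqs q (Suc m). 2 * real (?e x - 1))"
    using sum_card_deletion_positions_minus_1[OF y] by (simp flip: sum_distrib_left of_nat_sum)
  then have S: "S = 2 * real m + (\<Sum>x\<in>seqs q (Suc m). ?d x)"
    by (simp add: S_def sum_subtractf)
  have d: "0 \<le> ?d x" "?d x = 0 \<longleftrightarrow> ?e x \<le> 2" for x
    using double_pred_le_xlog2x[of "?e x"] by auto
  then show "2 * real m \<le> S"
    by (simp add: S sum_nonneg)
  have "S = 2 * real m \<longleftrightarrow> (\<forall>x\<in>seqs q (Suc m). ?e x \<le> 2)"
    using d by (simp add: S sum_nonneg_eq_0_iff[OF finite_seqs])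
  then show "S = 2 * real m \<longleftrightarrow> distinct_adj y"
    using distinct_adj_iff_card_deletion_positions_le_2[OF y] by simp
qed

lemma input_entropy_one_deletion_bound:
  assumes y: "y \<in> seqs q m" and "1 \<le> q"
  defines "V \<equiv> log 2 (real (Suc m) * real q) - 2 * real m / (real (Suc m) * real q)"
  shows "input_entropy q (Suc m) 1 y \<le> V" and "input_entropy q (Suc m) 1 y = V \<longleftrightarrow> distinct_adj y"
proof -
  define N where "N = real (Suc m) * real q"
  define S where "S = (\<Sum>x\<in>seqs q (Suc m). real (card (deletion_positions y x))
                        * log 2 (real (card (deletion_positions y x))))"
  have N: "0 < N"
    using assms(2) by (simp add: N_def)
  have H: "input_entropy q (Suc m) 1 y = log 2 N - S / N"
    using input_entropy_one_deletion[OF assms(1,2)] by (simp add: N_def S_def)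
  have "2 * real m / N \<le> S / N"
    using sum_xlog2x_card_deletion_positions(1)[OF y] N by (simp add: S_def divide_right_mono)
  then show "input_entropy q (Suc m) 1 y \<le> V"
    unfolding H V_def N_def[symmetric] by simp
  have "input_entropy q (Suc m) 1 y = V \<longleftrightarrow> S = 2 * real m"
    unfolding H V_def N_def[symmetric] using N by (simp add: divide_cancel_right)
  also have "\<dots> \<longleftrightarrow> distinct_adj y"
    using sum_xlog2x_card_deletion_positions(2)[OF y] by (simp add: S_def)
  finally show "input_entropy q (Suc m) 1 y = V \<longleftrightarrow> distinct_adj y" .
qed

theorem theorem5:
  fixes q n m :: nat
  assumes "q \<ge> 2" and "n \<ge> 2" and "m = n - 1"
  shows "Max (input_entropy q n 1 ` seqs q m) = log 2 (real n * real q) - 2 * real m / (real n * real q)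
       \<and> (\<forall>y\<in>seqs q m. input_entropy q n 1 y = Max (input_entropy q n 1 ` seqs q m) \<longrightarrow> runs y = m)"
proof -
  define V where "V = log 2 (real n * real q) - 2 * real m / (real n * real q)"
  have n: "n = Suc m"
    using assms(2,3) by simp
  have bound: "input_entropy q n 1 y \<le> V"
    and attained: "input_entropy q n 1 y = V \<longleftrightarrow> distinct_adj y" if "y \<in> seqs q m" for y
    using input_entropy_one_deletion_bound[OF that] assms(1) unfolding V_def n by simp_all
  define alternating where "alternating = map (\<lambda>i. i mod 2) [0..<m]"
  have "alternating \<in> seqs q m" and "distinct_adj alternating"
    using assms(1) by (auto simp: alternating_def seqs_def distinct_adj_conv_nth mod_Suc)
  then have "Max (input_entropy q n 1 ` seqs q m) = V"
    using bound attained finite_seqs by (intro Max_eqI) auto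
  moreover have "runs y = m" if "y \<in> seqs q m" and "input_entropy q n 1 y = V" for y
    using that attained by (simp add: runs_def seqs_def distinct_adj_conv_length_remdups_adj)
  ultimately show ?thesis
    by (simp add: V_def)
qed

end
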